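(* For every integer $n\ge 1$, the origami flip graph ${\rm OFG}(M_{2,n})$ of the $2\times n$ Miura-ori has exactly $2\cdot 3^{n-1}$ vertices.
   Context: The $2\times n$ Miura-ori $M_{2,n}$ ($n\ge 1$) is the crease pattern made of $2$ rows and $n$ columns of congruent parallelograms, with faces $\alpha_{i,j}$ ($i\in\{1,2\}$ the row, $j\in\{1,\dots,n\}$ the column). Its interior vertices are $x_1,\dots,x_{n-1}$ (on the middle line, left to right) and its creases are $e_0$ together with $e_{3k-1},e_{3k},e_{3k+1}$ for $k=1,\dots,n-1$ (so $3n-2$ creases; we write $e_0$ also as $e_{3\cdot 1-3}$). At $x_k$ the incident creases are: left $e_{3k-3}$, top $e_{3k-1}$, right $e_{3k}$, bottom $e_{3k+1}$; the two sector angles adjacent to the left crease are obtuse, the other two are acute. Face $\alpha_{1,j}$ is bordered by those of $e_{3j-4}$ (present iff $j\ge2$), $e_{3j-3}$, $e_{3j-1}$ (present iff $j\le n-1$); face $\alpha_{2,j}$ is bordered by those of $e_{3j-2}$ (present iff $j\ge 2$), $e_{3j-3}$, $e_{3j+1}$ (present iff $j\le n-1$). A mountain–valley (MV) assignment is a map $\mu$ from the creases to $\{1,-1\}$ ($1$ = mountain $M$, $-1$ = valley $V$). It is locally valid if for every $k=1,\dots,n-1$ exactly one of $\mu(e_{3k-1}),\mu(e_{3k}),\mu(e_{3k+1})$ differs from $\mu(e_{3k-3})$ (equivalently: at each vertex three creases have one parity and one the other, and the minority crease is not the one between the two obtuse angles). The face flip of $\alpha$ turns $\mu$ into $\mu_\alpha$,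 which negates $\mu$ on the creases bordering $\alpha$ and agrees with $\mu$ elsewhere; $\alpha$ is flippable under $\mu$ if both $\mu$ and $\mu_\alpha$ are locally valid. ${\rm OFG}(M_{2,n})$ is the graph whose vertices are the locally valid MV assignments of $M_{2,n}$, with $\mu\sim\mu_\alpha$ whenever $\alpha$ is flippable under $\mu$. *)

theory Defs
  imports "HOL-Library.FuncSet"
begin

text \<open>Creases of the 2 x n Miura-ori, indexed by naturals: e_0 and e_{3k-1}, e_{3k}, e_{3k+1}
  for k = 1..n-1.\<close>
definition creases :: "nat \<Rightarrow> nat set" where
  "creases n = {0} \<union> (\<Union>k\<in>{1..n-1}. {3*k-1, 3*k, 3*k+1})"

definition faces :: "nat \<Rightarrow> (nat \<times> nat) set" where
  "faces n = {1,2} \<times> {1..n}"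

definition face_border :: "nat \<Rightarrow> nat \<times> nat \<Rightarrow> nat set" where
  "face_border n f = (case f of (i, j) \<Rightarrow>
     if i = 1 then
       (if 2 \<le> j then {3*j-4} else {}) \<union> {3*j-3} \<union> (if j \<le> n-1 then {3*j-1} else {})
     else
       (if 2 \<le> j then {3*j-2} else {}) \<union> {3*j-3} \<union> (if j \<le> n-1 then {3*j+1} else {}))"

text \<open>MV assignments: maps from the creases to {1,-1} (1 = mountain, -1 = valley).\<close>
definition MV_assignments :: "nat \<Rightarrow> (nat \<Rightarrow> int) set" where
  "MV_assignments n = (creases n \<rightarrow>\<^sub>E {1, -1})"

definition locally_valid :: "nat \<Rightarrow> (nat \<Rightarrow> int) \<Rightarrow> bool" where
  "locally_valid n \<mu> \<longleftrightarrow> \<mu> \<in> MV_assignments n \<and>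
     (\<forall>k\<in>{1..n-1}. card {c \<in> {3*k-1, 3*k, 3*k+1}. \<mu> c \<noteq> \<mu> (3*k-3)} = 1)"

definition face_flip :: "nat \<Rightarrow> nat \<times> nat \<Rightarrow> (nat \<Rightarrow> int) \<Rightarrow> (nat \<Rightarrow> int)" where
  "face_flip n \<alpha> \<mu> = (\<lambda>c. if c \<in> face_border n \<alpha> then - \<mu> c else \<mu> c)"

definition flippable :: "nat \<Rightarrow> nat \<times> nat \<Rightarrow> (nat \<Rightarrow> int) \<Rightarrow> bool" where
  "flippable n \<alpha> \<mu> \<longleftrightarrow> locally_valid n \<mu> \<and> locally_valid n (face_flip n \<alpha> \<mu>)"

definition OFG_vertices :: "nat \<Rightarrow> (nat \<Rightarrow> int) set" where
  "OFG_vertices n = {\<mu>. locally_valid n \<mu>}"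

definition OFG_edges :: "nat \<Rightarrow> (nat \<Rightarrow> int) set set" where
  "OFG_edges n = {{\<mu>, face_flip n \<alpha> \<mu>} | \<mu> \<alpha>. \<alpha> \<in> faces n \<and> flippable n \<alpha> \<mu>}"

definition OFG :: "nat \<Rightarrow> (nat \<Rightarrow> int) set \<times> (nat \<Rightarrow> int) set set" where
  "OFG n = (OFG_vertices n, OFG_edges n)"

end

theory Submission
  imports Defs
begin

text \<open>Creases are numbered as in the paper: the interior vertex x_k has left crease 3k-3 and
  further creases 3k-1, 3k, 3k+1, and local validity at x_k says that exactly one of these
  three, its minority crease, differs from the left one. Going from M_{2,m} to M_{2,m+1} adds
  the vertex x_m together with exactly the creases 3m-1, 3m, 3m+1, whereas its left crease
  3m-3 is already a crease of M_{2,m}. So a valid assignment of M_{2,m+1} amounts to a valid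
  assignment of M_{2,m} together with a free choice of the minority crease at x_m, and the
  number of valid assignments triples at each step, starting from the two assignments of the
  single crease of M_{2,1}.\<close>

lemma signs_neq_iff_neg: "(x::int) \<in> {1, -1} \<Longrightarrow> y \<in> {1, -1} \<Longrightarrow> x \<noteq> y \<longleftrightarrow> x = - y"
  by auto

lemma if_neg_mem_signs: "(x::int) \<in> {1, -1} \<Longrightarrow> (if b then - x else x) \<in> {1, -1}"
  by auto

lemma creases_Suc:
  assumes "1 \<le> m"
  shows "creases (Suc m) = creases m \<union> {3*m-1, 3*m, 3*m+1}"
proof -
  have "{1..Suc m - 1} = insert m {1..m-1}" using assms by auto
  then show ?thesis unfolding creases_def by auto
qed

lemma creases_bound: "c \<in> creases m \<Longrightarrow> c \<le> 3*m-2"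
  unfolding creases_def by auto

lemma vertex_creases_subset: "1 \<le> k \<Longrightarrow> k < m \<Longrightarrow> {3*k-1, 3*k, 3*k+1} \<subseteq> creases m"
  unfolding creases_def by auto

lemma left_crease_mem:
  assumes "1 \<le> k" "k \<le> m"
  shows "3*k-3 \<in> creases m"
proof (cases "k = 1")
  case True
  then show ?thesis by (simp add: creases_def)
next
  case False
  then have "3*k-3 \<in> {3*(k-1)-1, 3*(k-1), 3*(k-1)+1}" "1 \<le> k-1" "k-1 < m"
    using assms by auto
  then show ?thesis using vertex_creases_subset by blast
qed

definition minority_creases :: "(nat \<Rightarrow> int) \<Rightarrow> nat \<Rightarrow> nat set" where
  "minority_creases \<mu> k = {c \<in> {3*k-1, 3*k, 3*k+1}. \<mu> c \<noteq> \<mu> (3*k-3)}"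

lemma locally_valid_iff_minority:
  "locally_valid n \<mu> \<longleftrightarrow>
     \<mu> \<in> MV_assignments n \<and> (\<forall>k\<in>{1..n-1}. \<exists>d. minority_creases \<mu> k = {d})"
  by (simp add: locally_valid_def minority_creases_def card_1_singleton_iff)

lemma minority_creases_cong:
  assumes "\<mu> (3*k-3) = \<nu> (3*k-3)" and "\<And>c. c \<in> {3*k-1, 3*k, 3*k+1} \<Longrightarrow> \<mu> c = \<nu> c"
  shows "minority_creases \<mu> k = minority_creases \<nu> k"
  unfolding minority_creases_def assms(1) using assms(2) by (metis (mono_tags, lifting))

definition extend :: "nat \<Rightarrow> (nat \<Rightarrow> int) \<Rightarrow> nat \<Rightarrow> (nat \<Rightarrow> int)" where
  "extend m \<mu> d = (\<lambda>c. if c \<in> {3*m-1, 3*m, 3*m+1}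
                      then (if c = d then - \<mu> (3*m-3) else \<mu> (3*m-3)) else \<mu> c)"

lemma extend_new_crease:
  "c \<in> {3*m-1, 3*m, 3*m+1} \<Longrightarrow> extend m \<mu> d c = (if c = d then - \<mu> (3*m-3) else \<mu> (3*m-3))"
  by (simp add: extend_def)

lemma extend_old_crease: "c \<notin> {3*m-1, 3*m, 3*m+1} \<Longrightarrow> extend m \<mu> d c = \<mu> c"
  by (simp add: extend_def)

lemma extend_eq_below: "1 \<le> m \<Longrightarrow> c \<le> 3*m-2 \<Longrightarrow> extend m \<mu> d c = \<mu> c"
  by (rule extend_old_crease) auto

lemma extend_on_creases: "1 \<le> m \<Longrightarrow> c \<in> creases m \<Longrightarrow> extend m \<mu> d c = \<mu> c"
  by (simp add: creases_bound extend_eq_below)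

lemma minority_creases_extend:
  assumes m: "1 \<le> m" and d: "d \<in> {3*m-1, 3*m, 3*m+1}" and nonzero: "\<mu> (3*m-3) \<noteq> 0"
  shows "minority_creases (extend m \<mu> d) m = {d}"
proof -
  have left: "extend m \<mu> d (3*m-3) = \<mu> (3*m-3)"
    using m by (simp add: extend_eq_below)
  have "extend m \<mu> d c \<noteq> \<mu> (3*m-3) \<longleftrightarrow> c = d" if "c \<in> {3*m-1, 3*m, 3*m+1}" for c
    using nonzero by (simp add: extend_new_crease[OF that])
  then show ?thesis
    using d unfolding minority_creases_def left by blast
qed

lemma left_crease_sign:
  assumes m: "1 \<le> m" and \<mu>: "\<mu> \<in> MV_assignments m"
  shows "\<mu> (3*m-3) \<in> {1, -1}"
  using \<mu> left_crease_mem[OF m order_refl] unfolding MV_assignments_def by blast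

lemma extend_in_MV_assignments:
  assumes m: "1 \<le> m" and \<mu>: "\<mu> \<in> MV_assignments m"
  shows "extend m \<mu> d \<in> MV_assignments (Suc m)"
  unfolding MV_assignments_def
proof (rule PiE_I)
  fix c assume "c \<in> creases (Suc m)"
  then consider (old) "c \<in> creases m" | (new) "c \<in> {3*m-1, 3*m, 3*m+1}"
    unfolding creases_Suc[OF m] by blast
  then show "extend m \<mu> d c \<in> {1, -1}"
  proof cases
    case old
    then show ?thesis
      using \<mu> unfolding extend_on_creases[OF m old] MV_assignments_def by blast
  next
    case new
    then show ?thesis
      using left_crease_sign[OF m \<mu>] by (simp only: extend_new_crease[OF new] if_neg_mem_signs)
  qed
next
  fix c assume "c \<notin> creases (Suc m)"
  then have "c \<notin> creases m" "c \<notin> {3*m-1, 3*m, 3*m+1}"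
    unfolding creases_Suc[OF m] by blast+
  then show "extend m \<mu> d c = undefined"
    using \<mu> PiE_arb[of \<mu> "creases m" _ c] unfolding MV_assignments_def
    by (simp add: extend_old_crease)
qed

lemma locally_valid_extend:
  assumes m: "1 \<le> m" and \<mu>: "locally_valid m \<mu>" and d: "d \<in> {3*m-1, 3*m, 3*m+1}"
  shows "locally_valid (Suc m) (extend m \<mu> d)"
proof -
  have MV: "\<mu> \<in> MV_assignments m"
    and old: "\<And>k. k \<in> {1..m-1} \<Longrightarrow> \<exists>d. minority_creases \<mu> k = {d}"
    using \<mu> by (auto simp: locally_valid_iff_minority)
  have new: "minority_creases (extend m \<mu> d) m = {d}"
    using minority_creases_extend[OF m d] left_crease_sign[OF m MV] by auto
  have same: "minority_creases (extend m \<mu> d) k = minority_creases \<mu> k" if "k \<in> {1..m-1}" for k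
    using that by (intro minority_creases_cong extend_eq_below[OF m]) auto
  have "\<exists>d'. minority_creases (extend m \<mu> d) k = {d'}" if "k \<in> {1..Suc m - 1}" for k
  proof (cases "k = m")
    case True
    with new show ?thesis by blast
  next
    case False
    with that have "k \<in> {1..m-1}" by auto
    with old same show ?thesis by metis
  qed
  then show ?thesis
    using extend_in_MV_assignments[OF m MV] unfolding locally_valid_iff_minority by blast
qed

lemma locally_valid_restrict:
  assumes m: "1 \<le> m" and \<nu>: "locally_valid (Suc m) \<nu>"
  shows "locally_valid m (restrict \<nu> (creases m))"
proof -
  have MV: "\<nu> \<in> MV_assignments (Suc m)"
    and valid: "\<And>k. k \<in> {1..m} \<Longrightarrow> \<exists>d. minority_creases \<nu> k = {d}"
    using \<nu> by (auto simp: locally_valid_iff_minority)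
  have "restrict \<nu> (creases m) \<in> MV_assignments m"
    using MV unfolding MV_assignments_def creases_Suc[OF m] restrict_PiE_iff by blast
  moreover have "minority_creases (restrict \<nu> (creases m)) k = minority_creases \<nu> k"
    if "k \<in> {1..m-1}" for k
  proof (rule minority_creases_cong)
    have "1 \<le> k" "k < m" using that by auto
    then have "3*k-3 \<in> creases m" "{3*k-1, 3*k, 3*k+1} \<subseteq> creases m"
      using left_crease_mem vertex_creases_subset by auto
    then show "restrict \<nu> (creases m) (3*k-3) = \<nu> (3*k-3)"
      and "\<And>c. c \<in> {3*k-1, 3*k, 3*k+1} \<Longrightarrow> restrict \<nu> (creases m) c = \<nu> c"
      by auto
  qed
  ultimately show ?thesis
    using valid unfolding locally_valid_iff_minority by force
qed

lemma extend_restrict: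
  assumes m: "1 \<le> m" and \<nu>: "locally_valid (Suc m) \<nu>" and d: "minority_creases \<nu> m = {d}"
  shows "extend m (restrict \<nu> (creases m)) d = \<nu>"
proof
  fix c
  have MV: "\<nu> \<in> creases (Suc m) \<rightarrow>\<^sub>E {1, -1}"
    using \<nu> by (simp add: locally_valid_def MV_assignments_def)
  have left: "restrict \<nu> (creases m) (3*m-3) = \<nu> (3*m-3)" "\<nu> (3*m-3) \<in> {1, -1}"
    using left_crease_mem[OF m order_refl] MV creases_Suc[OF m] by auto
  consider (old) "c \<in> creases m" | (new) "c \<in> {3*m-1, 3*m, 3*m+1}" | (outside) "c \<notin> creases (Suc m)"
    unfolding creases_Suc[OF m] by blast
  then show "extend m (restrict \<nu> (creases m)) d c = \<nu> c"
  proof cases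
    case old
    then show ?thesis by (simp add: extend_on_creases[OF m])
  next
    case new
    have "\<nu> c \<in> {1, -1}"
      using new MV creases_Suc[OF m] by auto
    then have "\<nu> c \<noteq> \<nu> (3*m-3) \<longleftrightarrow> \<nu> c = - \<nu> (3*m-3)"
      using left(2) by (rule signs_neq_iff_neg)
    moreover have "\<nu> c \<noteq> \<nu> (3*m-3) \<longleftrightarrow> c = d"
      using d new unfolding minority_creases_def by blast
    ultimately have "\<nu> c = (if c = d then - \<nu> (3*m-3) else \<nu> (3*m-3))"
      by argo
    then show ?thesis
      using left(1) by (simp add: extend_new_crease[OF new])
  next
    case outside
    then have "c \<notin> creases m" "c \<notin> {3*m-1, 3*m, 3*m+1}"
      unfolding creases_Suc[OF m] by blast+
    then show ?thesis
      using PiE_arb[OF MV outside] by (simp add: extend_old_crease)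
  qed
qed

lemma restrict_extend:
  assumes m: "1 \<le> m" and \<mu>: "\<mu> \<in> MV_assignments m"
  shows "restrict (extend m \<mu> d) (creases m) = \<mu>"
proof -
  have "restrict (extend m \<mu> d) (creases m) = restrict \<mu> (creases m)"
    by (rule restrict_ext) (rule extend_on_creases[OF m])
  also have "\<dots> = \<mu>"
    using \<mu> unfolding MV_assignments_def by (rule PiE_restrict)
  finally show ?thesis .
qed

lemma inj_on_extend:
  assumes m: "1 \<le> m"
  shows "inj_on (\<lambda>(\<mu>, d). extend m \<mu> d) (OFG_vertices m \<times> {3*m-1, 3*m, 3*m+1})"
proof (rule inj_onI, clarify)
  fix \<mu> d \<mu>' d'
  assume \<mu>: "\<mu> \<in> OFG_vertices m" and d: "d \<in> {3*m-1, 3*m, 3*m+1}"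
    and \<mu>': "\<mu>' \<in> OFG_vertices m" and d': "d' \<in> {3*m-1, 3*m, 3*m+1}"
    and eq: "extend m \<mu> d = extend m \<mu>' d'"
  have MV: "\<mu> \<in> MV_assignments m" "\<mu>' \<in> MV_assignments m"
    using \<mu> \<mu>' by (simp_all add: OFG_vertices_def locally_valid_def)
  have "\<mu> = \<mu>'"
    using restrict_extend[OF m MV(1), of d] restrict_extend[OF m MV(2), of d'] eq by simp
  have nonzero: "\<mu> (3*m-3) \<noteq> 0"
    using left_crease_sign[OF m MV(1)] by auto
  have "{d} = minority_creases (extend m \<mu> d) m"
    using minority_creases_extend[where \<mu> = \<mu>, OF m d nonzero] by simp
  also have "\<dots> = minority_creases (extend m \<mu> d') m"
    using eq \<open>\<mu> = \<mu>'\<close> by simp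
  also have "\<dots> = {d'}"
    using minority_creases_extend[where \<mu> = \<mu>, OF m d' nonzero] by simp
  finally have "d = d'" by simp
  with \<open>\<mu> = \<mu>'\<close> show "\<mu> = \<mu>' \<and> d = d'" by simp
qed

lemma OFG_vertices_Suc:
  assumes m: "1 \<le> m"
  shows "OFG_vertices (Suc m) = (\<lambda>(\<mu>, d). extend m \<mu> d) ` (OFG_vertices m \<times> {3*m-1, 3*m, 3*m+1})"
proof
  show "(\<lambda>(\<mu>, d). extend m \<mu> d) ` (OFG_vertices m \<times> {3*m-1, 3*m, 3*m+1}) \<subseteq> OFG_vertices (Suc m)"
    using locally_valid_extend[OF m] by (auto simp: OFG_vertices_def)
next
  show "OFG_vertices (Suc m) \<subseteq> (\<lambda>(\<mu>, d). extend m \<mu> d) ` (OFG_vertices m \<times> {3*m-1, 3*m, 3*m+1})"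
  proof
    fix \<nu> assume "\<nu> \<in> OFG_vertices (Suc m)"
    then have \<nu>: "locally_valid (Suc m) \<nu>" by (simp add: OFG_vertices_def)
    moreover have "m \<in> {1..Suc m - 1}" using m by simp
    ultimately obtain d where d: "minority_creases \<nu> m = {d}"
      unfolding locally_valid_iff_minority by blast
    then have "d \<in> {3*m-1, 3*m, 3*m+1}" by (auto simp: minority_creases_def)
    with extend_restrict[OF m \<nu> d] locally_valid_restrict[OF m \<nu>]
    show "\<nu> \<in> (\<lambda>(\<mu>, d). extend m \<mu> d) ` (OFG_vertices m \<times> {3*m-1, 3*m, 3*m+1})"
      by (force simp: OFG_vertices_def)
  qed
qed

lemma card_OFG_vertices: "1 \<le> n \<Longrightarrow> card (OFG_vertices n) = 2 * 3 ^ (n - 1)"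
proof (induction n rule: dec_induct)
  case base
  have "creases 1 = {0}" by (auto simp: creases_def)
  then have "OFG_vertices 1 = {0} \<rightarrow>\<^sub>E {1, -1}"
    by (auto simp: OFG_vertices_def locally_valid_def MV_assignments_def)
  then show ?case by (simp add: card_PiE)
next
  case (step m)
  have "card (OFG_vertices (Suc m)) = card (OFG_vertices m \<times> {3*m-1, 3*m, 3*m+1})"
    unfolding OFG_vertices_Suc[OF step.hyps(1)] by (rule card_image[OF inj_on_extend[OF step.hyps(1)]])
  also have "\<dots> = card (OFG_vertices m) * 3"
    using step.hyps(1) by (simp add: card_cartesian_product card_insert_if)
  finally show ?case
    using step.IH step.hyps(1) by (cases m) auto
qed

theorem theorem3p1:
  fixes n :: nat
  assumes "n \<ge> 1"
  shows "card (fst (OFG n)) = 2 * 3 ^ (n - 1)"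
  using card_OFG_vertices[OF assms] by (simp add: OFG_def)

end
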